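(* Let $\mathcal{T}=(V,A,E,f,q,v_0)$ be a decorated rooted tree that has negative determinants and satisfies $f(A)\subseteq\mathbb{N}=\{0,1,2,\dots\}$. (a) If $v,v'\in V$ satisfy $v<v'$, then: (i) if $N_v<0$ then $N_{v'}<0$; (ii) if $N_v\le0$ then $N_{v'}\le0$; (iii) if $N_v\le0$ and there exists $\alpha\in A\setminus A_0$ with $\alpha>v'$, then $N_{v'}<0$. (b) The set $\{v\in V: N_v\ge0\}$ is connected. (c) The set $\{v\in V: N_v>0\}$ is connected.
   Context: A graph is a pair $(X_0,X_1)$ of finite sets such that each element of $X_1$ (an edge) is a $2$-element subset of $X_0$; elements of $X_0$ are cells. A path is a tuple $(x_0,\dots,x_n)$ ($n\ge0$) of cells with $\{x_i,x_{i+1}\}$ an edge for each $i<n$, these edges pairwise distinct; a cell/edge is in the path if it is some $x_i$ / some $\{x_i,x_{i+1}\}$. The graph is a tree if any two cells $x,y$ are joined by a unique path $\gamma_{x,y}$. A decorated tree is $(V,A,E,f,q)$ with $V$ (vertices), $A$ (arrows) finite disjoint sets, $(V\cup A,E)$ a tree, every arrow contained in exactly one edge, $f:A\to\mathbb{Z}$, $q(e,x)\in\mathbb{Z}$ for each $e\in E$, $x\in e$, with $q(e,\alpha)=1$ for $\alpha\in A$, and for each $v\in V$ and distinct edges $e,e'\ni v$, $\gcd(q(e,v),q(e',v))=1$. $A_0=\{\alpha\in A:f(\alpha)=0\}$. For $x\in V\cup A$, $e\ni x$: $Q(e,x)=\prod q(e',x)$ over edges $e'\ne e$ containing $x$ (empty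 product $=1$); for an edge $e=\{x,y\}$, $\det(e)=q(e,x)q(e,y)-Q(e,x)Q(e,y)$. An edge $\varepsilon$ is incident to a path $\gamma$ if it is not in $\gamma$ but contains a cell $u$ of $\gamma$; $q(\varepsilon,\gamma):=q(\varepsilon,u)$. For $v\ne\alpha$, $v\in V\cup A$, $\alpha\in A$: $x_{v,\alpha}=f(\alpha)\prod_\varepsilon q(\varepsilon,\gamma_{v,\alpha})$ over edges incident to $\gamma_{v,\alpha}$. For $v\in V\cup A_0$, $N_v=\sum_{\alpha\in A\setminus A_0}x_{v,\alpha}$. A root of $(V,A,E,f,q)$ is a vertex $v_0$ with $q(e,v_0)=1$ for every edge $e\ni v_0$ such that for every $v\in V\setminus\{v_0\}$, all edges $e\ni v$ not in $\gamma_{v_0,v}$ satisfy $q(e,v)\ge1$ and at most one of them satisfies $q(e,v)\ne1$. A decorated rooted tree is $(V,A,E,f,q,v_0)$ with $v_0$ a root. For distinct $x,y\in V\cup A$, $x<y$ means $x$ is in $\gamma_{v_0,y}$. $\mathcal{T}$ has negative determinants if $\det(e)<0$ for every edge $e=\{x,y\}$ with $x,y\in V$. A subset $S\subseteq V\cup A$ is connected if every path $(x_0,\dots,x_n)$ with $x_0,x_n\in S$ has $x_i\in S$ for all $0<i<n$. *)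

theory Defs
  imports Main
begin

definition graph :: "'a set \<Rightarrow> 'a set set \<Rightarrow> bool" where
  "graph X0 X1 \<longleftrightarrow> finite X0 \<and> finite X1 \<and> (\<forall>e\<in>X1. e \<subseteq> X0 \<and> card e = 2)"

text \<open>A path (x_0,...,x_n) is represented by a nonempty list; its edges are the
  sets {x_i, x_(i+1)}.\<close>
definition path_edge_list :: "'a list \<Rightarrow> 'a set list" where
  "path_edge_list xs = map (\<lambda>(a,b). {a,b}) (zip xs (tl xs))"

definition path_edges :: "'a list \<Rightarrow> 'a set set" where
  "path_edges xs = set (path_edge_list xs)"

definition is_path :: "'a set \<Rightarrow> 'a set set \<Rightarrow> 'a list \<Rightarrow> bool" where
  "is_path X0 X1 xs \<longleftrightarrow> xs \<noteq> [] \<and> set xs \<subseteq> X0 \<and>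
     set (path_edge_list xs) \<subseteq> X1 \<and> distinct (path_edge_list xs)"

definition is_tree :: "'a set \<Rightarrow> 'a set set \<Rightarrow> bool" where
  "is_tree X0 X1 \<longleftrightarrow> graph X0 X1 \<and>
     (\<forall>x\<in>X0. \<forall>y\<in>X0. \<exists>!xs. is_path X0 X1 xs \<and> hd xs = x \<and> last xs = y)"

definition tpath :: "'a set \<Rightarrow> 'a set set \<Rightarrow> 'a \<Rightarrow> 'a \<Rightarrow> 'a list" where
  "tpath X0 X1 x y = (THE xs. is_path X0 X1 xs \<and> hd xs = x \<and> last xs = y)"

definition connected_set :: "'a set \<Rightarrow> 'a set set \<Rightarrow> 'a set \<Rightarrow> bool" where
  "connected_set X0 X1 S \<longleftrightarrow>
     (\<forall>xs. is_path X0 X1 xs \<longrightarrow> hd xs \<in> S \<longrightarrow> last xs \<in> S \<longrightarrow> set xs \<subseteq> S)"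

definition decorated_tree ::
  "'a set \<Rightarrow> 'a set \<Rightarrow> 'a set set \<Rightarrow> ('a \<Rightarrow> int) \<Rightarrow> ('a set \<Rightarrow> 'a \<Rightarrow> int) \<Rightarrow> bool" where
  "decorated_tree V A E f q \<longleftrightarrow>
     finite V \<and> finite A \<and> V \<inter> A = {} \<and> is_tree (V \<union> A) E \<and>
     (\<forall>\<alpha>\<in>A. \<exists>!e. e \<in> E \<and> \<alpha> \<in> e) \<and>
     (\<forall>\<alpha>\<in>A. \<forall>e\<in>E. \<alpha> \<in> e \<longrightarrow> q e \<alpha> = 1) \<and>
     (\<forall>v\<in>V. \<forall>e\<in>E. \<forall>e'\<in>E. v \<in> e \<longrightarrow> v \<in> e' \<longrightarrow> e \<noteq> e' \<longrightarrow> gcd (q e v) (q e' v) = 1)"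

definition A0 :: "'a set \<Rightarrow> ('a \<Rightarrow> int) \<Rightarrow> 'a set" where
  "A0 A f = {\<alpha>\<in>A. f \<alpha> = 0}"

definition bigQ :: "'a set set \<Rightarrow> ('a set \<Rightarrow> 'a \<Rightarrow> int) \<Rightarrow> 'a set \<Rightarrow> 'a \<Rightarrow> int" where
  "bigQ E q e x = (\<Prod>e'\<in>{e'\<in>E. x \<in> e' \<and> e' \<noteq> e}. q e' x)"

definition edge_det :: "'a set set \<Rightarrow> ('a set \<Rightarrow> 'a \<Rightarrow> int) \<Rightarrow> 'a \<Rightarrow> 'a \<Rightarrow> int" where
  "edge_det E q x y = q {x,y} x * q {x,y} y - bigQ E q {x,y} x * bigQ E q {x,y} y"

definition incident_edges :: "'a set set \<Rightarrow> 'a list \<Rightarrow> 'a set set" where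
  "incident_edges E \<gamma> = {\<epsilon>\<in>E. \<epsilon> \<notin> path_edges \<gamma> \<and> (\<exists>u\<in>set \<gamma>. u \<in> \<epsilon>)}"

definition q_path :: "('a set \<Rightarrow> 'a \<Rightarrow> int) \<Rightarrow> 'a set \<Rightarrow> 'a list \<Rightarrow> int" where
  "q_path q \<epsilon> \<gamma> = q \<epsilon> (SOME u. u \<in> set \<gamma> \<and> u \<in> \<epsilon>)"

definition xval ::
  "'a set \<Rightarrow> 'a set \<Rightarrow> 'a set set \<Rightarrow> ('a \<Rightarrow> int) \<Rightarrow> ('a set \<Rightarrow> 'a \<Rightarrow> int) \<Rightarrow> 'a \<Rightarrow> 'a \<Rightarrow> int" where
  "xval V A E f q v \<alpha> =
     (let \<gamma> = tpath (V \<union> A) E v \<alpha> in f \<alpha> * (\<Prod>\<epsilon>\<in>incident_edges E \<gamma>. q_path q \<epsilon> \<gamma>))"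

definition Nval ::
  "'a set \<Rightarrow> 'a set \<Rightarrow> 'a set set \<Rightarrow> ('a \<Rightarrow> int) \<Rightarrow> ('a set \<Rightarrow> 'a \<Rightarrow> int) \<Rightarrow> 'a \<Rightarrow> int" where
  "Nval V A E f q v = (\<Sum>\<alpha>\<in>A - A0 A f. xval V A E f q v \<alpha>)"

definition is_root ::
  "'a set \<Rightarrow> 'a set \<Rightarrow> 'a set set \<Rightarrow> ('a set \<Rightarrow> 'a \<Rightarrow> int) \<Rightarrow> 'a \<Rightarrow> bool" where
  "is_root V A E q v0 \<longleftrightarrow> v0 \<in> V \<and> (\<forall>e\<in>E. v0 \<in> e \<longrightarrow> q e v0 = 1) \<and>
     (\<forall>v\<in>V - {v0}.
        (\<forall>e\<in>E. v \<in> e \<longrightarrow> e \<notin> path_edges (tpath (V \<union> A) E v0 v) \<longrightarrow> q e v \<ge> 1) \<and>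
        card {e\<in>E. v \<in> e \<and> e \<notin> path_edges (tpath (V \<union> A) E v0 v) \<and> q e v \<noteq> 1} \<le> 1)"

definition decorated_rooted_tree ::
  "'a set \<Rightarrow> 'a set \<Rightarrow> 'a set set \<Rightarrow> ('a \<Rightarrow> int) \<Rightarrow> ('a set \<Rightarrow> 'a \<Rightarrow> int) \<Rightarrow> 'a \<Rightarrow> bool" where
  "decorated_rooted_tree V A E f q v0 \<longleftrightarrow> decorated_tree V A E f q \<and> is_root V A E q v0"

definition tree_less :: "'a set \<Rightarrow> 'a set \<Rightarrow> 'a set set \<Rightarrow> 'a \<Rightarrow> 'a \<Rightarrow> 'a \<Rightarrow> bool" where
  "tree_less V A E v0 x y \<longleftrightarrow> x \<noteq> y \<and> x \<in> set (tpath (V \<union> A) E v0 y)"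

definition negative_determinants ::
  "'a set \<Rightarrow> 'a set set \<Rightarrow> ('a set \<Rightarrow> 'a \<Rightarrow> int) \<Rightarrow> bool" where
  "negative_determinants V E q \<longleftrightarrow> (\<forall>x\<in>V. \<forall>y\<in>V. {x,y} \<in> E \<longrightarrow> edge_det E q x y < 0)"

end

theory Submission
  imports Defs
begin

(* Let u be the parent of a vertex w and e = {u, w}. The path from u or from w to an arrow crosses
   e, so x_{u,alpha} and x_{w,alpha} share all factors except those at u and w. Splitting the
   arrows into those behind w (contributing R) and the others (contributing P) gives
   N_u = Q(e,u) R + q(e,u) P and N_w = q(e,w) R + Q(e,w) P, hence q(e,u) N_w = Q(e,w) N_u + R det(e).
   The root conditions give q(e,u) >= 1, Q(e,w) >= 1 and R >= 0, with R > 0 as soon as an arrow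
   alpha with f(alpha) > 0 lies behind w; as det(e) < 0, the conditions N < 0 and N <= 0 pass from
   parent to child, and (a) follows by induction along the path from the root. For (b) and (c):
   every cell of a path lies on the root path of one of its two ends, and both sets are closed
   under passing to ancestors. *)

section \<open>Paths in a tree\<close>

lemma path_edge_list_simps [simp]:
  "path_edge_list [] = []"
  "path_edge_list [x] = []"
  "path_edge_list (x # y # zs) = {x, y} # path_edge_list (y # zs)"
  by (simp_all add: path_edge_list_def)

lemma path_edge_list_append:
  "path_edge_list (xs @ ys) =
     path_edge_list xs @ (if xs = [] \<or> ys = [] then [] else [{last xs, hd ys}]) @ path_edge_list ys"
proof (induction xs rule: induct_list012)
  case (2 x)
  then show ?case by (cases ys) auto
qed auto

lemma path_edges_append:
  "path_edges (xs @ ys) =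
     path_edges xs \<union> path_edges ys \<union> (if xs = [] \<or> ys = [] then {} else {{last xs, hd ys}})"
  by (simp add: path_edges_def path_edge_list_append)

lemma path_edges_Cons: "xs \<noteq> [] \<Longrightarrow> path_edges (x # xs) = insert {x, hd xs} (path_edges xs)"
  by (cases xs) (auto simp: path_edges_def)

lemma path_edge_subset: "\<epsilon> \<in> path_edges xs \<Longrightarrow> \<epsilon> \<subseteq> set xs"
  unfolding path_edges_def by (induction xs rule: induct_list012) auto

lemma path_edge_list_subset_iff:
  "set (path_edge_list xs) \<subseteq> E \<longleftrightarrow> successively (\<lambda>a b. {a, b} \<in> E) xs"
  by (induction xs rule: induct_list012) auto

lemma distinct_path_edge_list: "distinct xs \<Longrightarrow> distinct (path_edge_list xs)"
  by (induction xs rule: induct_list012) (auto dest: path_edge_subset[unfolded path_edges_def])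

locale tree =
  fixes T :: "'a set" and E :: "'a set set"
  assumes is_tree: "is_tree T E"
begin

abbreviation \<gamma> :: "'a \<Rightarrow> 'a \<Rightarrow> 'a list" where "\<gamma> x y \<equiv> tpath T E x y"

definition walk :: "'a list \<Rightarrow> bool" where
  "walk xs \<longleftrightarrow> xs \<noteq> [] \<and> set xs \<subseteq> T \<and> successively (\<lambda>a b. {a, b} \<in> E) xs"

definition simple_walk :: "'a list \<Rightarrow> bool" where
  "simple_walk xs \<longleftrightarrow> walk xs \<and> distinct xs"

lemma finite_edges: "finite E"
  and edge_card: "\<epsilon> \<in> E \<Longrightarrow> card \<epsilon> = 2"
  and edge_subset: "\<epsilon> \<in> E \<Longrightarrow> \<epsilon> \<subseteq> T"
  using is_tree by (auto simp: is_tree_def graph_def)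

lemma edge_neq: "{a, b} \<in> E \<Longrightarrow> a \<noteq> b"
  using edge_card[of "{a, b}"] by auto

lemma is_path_infix: "is_path T E (xs @ ys @ zs) \<Longrightarrow> ys \<noteq> [] \<Longrightarrow> is_path T E ys"
  by (auto simp: is_path_def path_edge_list_append)

lemma tpath_unique:
  assumes "is_path T E xs" shows "\<gamma> (hd xs) (last xs) = xs"
proof -
  have "hd xs \<in> T" "last xs \<in> T" using assms by (auto simp: is_path_def)
  then have "\<exists>!ys. is_path T E ys \<and> hd ys = hd xs \<and> last ys = last xs"
    using is_tree by (simp add: is_tree_def)
  then show ?thesis unfolding tpath_def by (rule the1_equality) (use assms in simp)
qed

lemma tpath_is_path:
  assumes "x \<in> T" "y \<in> T"
  shows "is_path T E (\<gamma> x y) \<and> hd (\<gamma> x y) = x \<and> last (\<gamma> x y) = y"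
proof -
  have "\<exists>!xs. is_path T E xs \<and> hd xs = x \<and> last xs = y"
    using assms is_tree by (simp add: is_tree_def)
  from theI'[OF this] show ?thesis unfolding tpath_def .
qed

lemma is_path_distinct:
  assumes "is_path T E xs" shows "distinct xs"
proof (rule ccontr)
  assume "\<not> distinct xs"
  then obtain as y bs cs where "xs = as @ [y] @ bs @ [y] @ cs"
    using not_distinct_decomp by blast
  then have loop: "is_path T E (y # bs @ [y])"
    using is_path_infix[of as "y # bs @ [y]" cs] assms by simp
  then have "is_path T E [y]" by (simp add: is_path_def)
  then have "\<gamma> y y = [y]" using tpath_unique by fastforce
  moreover have "\<gamma> y y = y # bs @ [y]" using tpath_unique[OF loop] by simp
  ultimately show False by simp
qed

lemma is_path_iff_simple_walk: "is_path T E xs \<longleftrightarrow> simple_walk xs"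
  using is_path_distinct distinct_path_edge_list
  by (auto simp: is_path_def simple_walk_def walk_def path_edge_list_subset_iff)

lemma tpath_eqI: "simple_walk xs \<Longrightarrow> \<gamma> (hd xs) (last xs) = xs"
  using tpath_unique is_path_iff_simple_walk by blast

lemma simple_walk_tpath: "x \<in> T \<Longrightarrow> y \<in> T \<Longrightarrow> simple_walk (\<gamma> x y)"
  and hd_tpath [simp]: "x \<in> T \<Longrightarrow> y \<in> T \<Longrightarrow> hd (\<gamma> x y) = x"
  and last_tpath [simp]: "x \<in> T \<Longrightarrow> y \<in> T \<Longrightarrow> last (\<gamma> x y) = y"
  using tpath_is_path is_path_iff_simple_walk by auto

lemma simple_walk_nonempty: "simple_walk xs \<Longrightarrow> xs \<noteq> []"
  and simple_walk_subset: "simple_walk xs \<Longrightarrow> set xs \<subseteq> T"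
  and simple_walk_distinct: "simple_walk xs \<Longrightarrow> distinct xs"
  by (auto simp: simple_walk_def walk_def)

lemma tpath_nonempty [simp]: "x \<in> T \<Longrightarrow> y \<in> T \<Longrightarrow> \<gamma> x y \<noteq> []"
  using simple_walk_tpath simple_walk_nonempty by blast

lemma tpath_subset: "x \<in> T \<Longrightarrow> y \<in> T \<Longrightarrow> set (\<gamma> x y) \<subseteq> T"
  using simple_walk_tpath simple_walk_subset by blast

lemma distinct_tpath: "x \<in> T \<Longrightarrow> y \<in> T \<Longrightarrow> distinct (\<gamma> x y)"
  using simple_walk_tpath simple_walk_distinct by blast

lemma simple_walk_appendD:
  assumes "simple_walk (xs @ ys)"
  shows "xs \<noteq> [] \<Longrightarrow> simple_walk xs" and "ys \<noteq> [] \<Longrightarrow> simple_walk ys"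
  using assms by (auto simp: simple_walk_def walk_def successively_append_iff)

lemma simple_walk_Cons:
  "simple_walk xs \<Longrightarrow> x \<in> T \<Longrightarrow> x \<notin> set xs \<Longrightarrow> {x, hd xs} \<in> E \<Longrightarrow> simple_walk (x # xs)"
  by (auto simp: simple_walk_def walk_def successively_Cons)

lemma simple_walk_rev: "simple_walk (rev xs) \<longleftrightarrow> simple_walk xs"
  by (auto simp: simple_walk_def walk_def insert_commute)

lemma simple_walk_edge: "{a, b} \<in> E \<Longrightarrow> simple_walk [a, b]"
  using edge_subset edge_neq by (auto simp: simple_walk_def walk_def)

lemma tpath_infix: "simple_walk (xs @ ys @ zs) \<Longrightarrow> ys \<noteq> [] \<Longrightarrow> \<gamma> (hd ys) (last ys) = ys"
  by (metis append_is_Nil_conv simple_walk_appendD tpath_eqI)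

lemma tpath_edge: "{a, b} \<in> E \<Longrightarrow> \<gamma> a b = [a, b]"
  using tpath_eqI[OF simple_walk_edge] by simp

lemma tpath_rev: "x \<in> T \<Longrightarrow> y \<in> T \<Longrightarrow> \<gamma> y x = rev (\<gamma> x y)"
  using tpath_eqI[of "rev (\<gamma> x y)"] simple_walk_tpath[of x y]
  by (simp add: simple_walk_rev hd_rev last_rev)

lemma walk_shortcut:
  "walk xs \<Longrightarrow> \<exists>ys. simple_walk ys \<and> hd ys = hd xs \<and> last ys = last xs \<and> set ys \<subseteq> set xs"
proof (induction "length xs" arbitrary: xs rule: less_induct)
  case less
  show ?case
  proof (cases "distinct xs")
    case True
    then show ?thesis using less.prems by (auto simp: simple_walk_def)
  next
    case False
    then obtain as y bs cs where xs: "xs = as @ [y] @ bs @ [y] @ cs"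
      using not_distinct_decomp by blast
    let ?P = "\<lambda>a b. {a, b} \<in> E"
    have "successively ?P (as @ [y])" "successively ?P (y # cs)"
      using less.prems xs successively_append_iff[of ?P "as @ [y]" "bs @ y # cs"]
        successively_append_iff[of ?P "as @ y # bs" "y # cs"]
      by (auto simp: walk_def)
    then have "walk (as @ [y] @ cs)"
      using less.prems xs successively_append_iff[of ?P "as @ [y]" cs]
      by (auto simp: walk_def successively_Cons)
    moreover have "length (as @ [y] @ cs) < length xs" "hd (as @ [y] @ cs) = hd xs"
      "last (as @ [y] @ cs) = last xs" "set (as @ [y] @ cs) \<subseteq> set xs"
      using xs by (auto simp: hd_append)
    ultimately show ?thesis using less.hyps by (metis order.trans)
  qed
qed

lemma walk_join: "walk xs \<Longrightarrow> walk ys \<Longrightarrow> last xs = hd ys \<Longrightarrow> walk (xs @ tl ys)"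
  by (cases ys) (auto simp: walk_def successively_append_iff successively_Cons)

lemma tpath_subset_join:
  assumes "x \<in> T" "y \<in> T" "z \<in> T"
  shows "set (\<gamma> x z) \<subseteq> set (\<gamma> x y) \<union> set (\<gamma> y z)"
proof -
  let ?xs = "\<gamma> x y @ tl (\<gamma> y z)"
  have "walk ?xs"
    using assms simple_walk_tpath by (intro walk_join) (auto simp: simple_walk_def)
  moreover have "hd ?xs = x" using assms by simp
  moreover have "last ?xs = z"
  proof (cases "tl (\<gamma> y z) = []")
    case True
    then have "\<gamma> y z = [y]" using assms by (metis hd_Cons_tl hd_tpath tpath_nonempty)
    then show ?thesis using True last_tpath[OF assms(2,3)] assms by simp
  next
    case False
    then show ?thesis using assms by (simp add: last_tl)
  qed
  ultimately obtain ys where ys: "simple_walk ys" "hd ys = x" "last ys = z" "set ys \<subseteq> set ?xs"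
    using walk_shortcut by metis
  have "\<gamma> x z = ys" using tpath_eqI[OF ys(1)] ys(2,3) by simp
  moreover have "set (tl (\<gamma> y z)) \<subseteq> set (\<gamma> y z)"
    using assms by (auto intro: list.set_sel(2))
  ultimately show ?thesis using ys(4) by auto
qed

lemma simple_walk_subset_root_paths:
  assumes "simple_walk xs" "r \<in> T"
  shows "set xs \<subseteq> set (\<gamma> r (hd xs)) \<union> set (\<gamma> r (last xs))"
proof -
  have ends: "hd xs \<in> T" "last xs \<in> T"
    using simple_walk_nonempty[OF assms(1)] simple_walk_subset[OF assms(1)] by auto
  have "set xs = set (\<gamma> (hd xs) (last xs))" using tpath_eqI[OF assms(1)] by simp
  also have "\<dots> \<subseteq> set (\<gamma> (hd xs) r) \<union> set (\<gamma> r (last xs))"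
    using tpath_subset_join ends assms(2) by blast
  finally show ?thesis using tpath_rev[OF assms(2) ends(1)] by simp
qed

lemma connected_set_if_root_paths_closed:
  assumes "r \<in> T" and "\<And>w. w \<in> S \<Longrightarrow> set (\<gamma> r w) \<subseteq> S"
  shows "connected_set T E S"
  unfolding connected_set_def is_path_iff_simple_walk
  using simple_walk_subset_root_paths assms by blast

lemma simple_walk_chord:
  assumes "simple_walk (xs @ a # ys @ b # zs)" and "{a, b} \<in> E"
  shows "ys = []"
  using tpath_infix[of xs "a # ys @ [b]" zs] tpath_edge assms by simp

lemma chord_in_path_edges:
  assumes "simple_walk xs" "a \<in> set xs" "b \<in> set xs" "{a, b} \<in> E"
  shows "{a, b} \<in> path_edges xs"
proof -
  have edge_between: "{a', b'} \<in> path_edges xs"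
    if "xs = P @ a' # M @ b' # S" "{a', b'} \<in> E" for P M S a' b'
    using simple_walk_chord[of P a' M b' S] assms(1) that
    by (simp add: path_edges_append path_edges_Cons)
  obtain P S where xs: "xs = P @ a # S" using assms(2) by (meson split_list)
  have "b \<in> set S \<or> b \<in> set P" using xs assms(3,4) edge_neq by auto
  then show ?thesis
  proof
    assume "b \<in> set S"
    then obtain M S' where "S = M @ b # S'" by (meson split_list)
    then show ?thesis using edge_between xs assms(4) by simp
  next
    assume "b \<in> set P"
    then obtain P' M where "P = P' @ b # M" by (meson split_list)
    then show ?thesis using edge_between[of P' b M a S] xs assms(4) by (simp add: insert_commute)
  qed
qed

lemma incident_edge_meets_path_once:
  assumes "simple_walk xs" "\<epsilon> \<in> incident_edges E xs"
    and "a \<in> \<epsilon>" "b \<in> \<epsilon>" "a \<in> set xs" "b \<in> set xs"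
  shows "a = b"
proof (rule ccontr)
  assume "a \<noteq> b"
  moreover have "\<epsilon> \<in> E" "\<epsilon> \<notin> path_edges xs" using assms(2) by (auto simp: incident_edges_def)
  ultimately have "\<epsilon> = {a, b}" using edge_card assms(3,4) by (auto simp: card_2_iff)
  then show False
    using chord_in_path_edges assms \<open>\<epsilon> \<in> E\<close> \<open>\<epsilon> \<notin> path_edges xs\<close> by blast
qed

lemma simple_walk_interior_edges:
  assumes "simple_walk (xs @ c # ys)" "xs \<noteq> []" "ys \<noteq> []"
  shows "{last xs, c} \<in> E" "{c, hd ys} \<in> E" "{last xs, c} \<noteq> {c, hd ys}"
proof -
  have "successively (\<lambda>a b. {a, b} \<in> E) (xs @ c # ys)" "distinct (xs @ c # ys)"
    using assms(1) by (auto simp: simple_walk_def walk_def)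
  moreover have "last xs \<noteq> hd ys" "last xs \<noteq> c"
    using calculation(2) last_in_set[OF assms(2)] hd_in_set[OF assms(3)] by auto
  ultimately show "{last xs, c} \<in> E" "{c, hd ys} \<in> E" "{last xs, c} \<noteq> {c, hd ys}"
    using assms(2,3) by (auto simp: successively_append_iff successively_Cons doubleton_eq_iff)
qed

lemma tpath_across_edge:
  assumes "{x, y} \<in> E" "z \<in> T"
  shows "\<gamma> x z = x # \<gamma> y z \<or> \<gamma> y z = y # \<gamma> x z"
proof (cases "x \<in> set (\<gamma> y z)")
  case False
  have "x \<in> T" "y \<in> T" using edge_subset assms(1) by auto
  then have "simple_walk (x # \<gamma> y z)"
    using simple_walk_Cons simple_walk_tpath False assms by simp
  then have "\<gamma> x z = x # \<gamma> y z"
    using tpath_eqI \<open>y \<in> T\<close> assms(2) by fastforce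
  then show ?thesis ..
next
  case True
  then obtain P S where split: "\<gamma> y z = P @ x # S" by (meson split_list)
  have T: "x \<in> T" "y \<in> T" using edge_subset assms(1) by auto
  have walk: "simple_walk (P @ x # S)" using simple_walk_tpath[OF T(2) assms(2)] split by simp
  have "hd (P @ [x]) = y" using hd_tpath[OF T(2) assms(2)] split by (cases P) auto
  then have "\<gamma> y x = P @ [x]" using tpath_infix[of "[]" "P @ [x]" S] walk by simp
  moreover have "\<gamma> y x = [y, x]" using tpath_edge assms(1) by (simp add: insert_commute)
  ultimately have "P = [y]" by simp
  moreover have "\<gamma> x z = x # S"
    using tpath_infix[of P "x # S" "[]"] walk last_tpath[OF T(2) assms(2)] split by simp
  ultimately show ?thesis using split by simp
qed

lemma tpath_parent:
  assumes "r \<in> T" "w \<in> T" "v \<in> set (\<gamma> r w)" "v \<noteq> w"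
  obtains u where "u \<in> set (\<gamma> r w)" "\<gamma> r w = \<gamma> r u @ [w]" "v \<in> set (\<gamma> r u)"
proof -
  define P where "P = butlast (\<gamma> r w)"
  have split: "\<gamma> r w = P @ [w]"
    using assms(1,2) unfolding P_def by (metis append_butlast_last_id last_tpath tpath_nonempty)
  have "v \<in> set P" using assms(3,4) split by auto
  then have "P \<noteq> []" by auto
  have "hd P = r" using hd_tpath[OF assms(1,2)] split \<open>P \<noteq> []\<close> by simp
  then have "\<gamma> r (last P) = P"
    using tpath_infix[of "[]" P "[w]"] simple_walk_tpath[OF assms(1,2)] split \<open>P \<noteq> []\<close> by simp
  then show thesis using that[of "last P"] split \<open>P \<noteq> []\<close> \<open>v \<in> set P\<close> by simp
qed

lemma edge_to_child:
  assumes "r \<in> T" "u \<in> T" "w \<in> T" "\<gamma> r w = \<gamma> r u @ [w]"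
  shows "{u, w} \<in> E"
proof -
  have "successively (\<lambda>a b. {a, b} \<in> E) (\<gamma> r u @ [w])"
    using simple_walk_tpath[of r w] assms by (simp add: simple_walk_def walk_def)
  then show ?thesis using assms by (simp add: successively_append_iff)
qed

lemma tpath_through_child:
  assumes T: "r \<in> T" "u \<in> T" "w \<in> T" "z \<in> T"
    and child: "\<gamma> r w = \<gamma> r u @ [w]" and "w \<in> set (\<gamma> r z)"
  shows "\<gamma> r z = \<gamma> r u @ \<gamma> w z" and "\<gamma> u z = u # \<gamma> w z"
proof -
  obtain X Y where split: "\<gamma> r z = X @ w # Y" using assms(6) by (meson split_list)
  have walk: "simple_walk (X @ w # Y)" using simple_walk_tpath[of r z] split T by simp
  have "hd (X @ [w]) = r" using hd_tpath[of r z] split T by (cases X) auto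
  then have "\<gamma> r w = X @ [w]" using tpath_infix[of "[]" "X @ [w]" Y] walk by simp
  then have X: "X = \<gamma> r u" using child by simp
  have "\<gamma> w z = w # Y"
    using tpath_infix[of X "w # Y" "[]"] walk last_tpath[of r z] split T by simp
  then show "\<gamma> r z = \<gamma> r u @ \<gamma> w z" using split X by simp
  have "u \<in> set X" using X T last_in_set[of "\<gamma> r u"] by simp
  then have "u \<notin> set (\<gamma> w z)"
    using simple_walk_distinct[OF walk] \<open>\<gamma> w z = w # Y\<close> by auto
  moreover have "u \<in> set (\<gamma> u z)" using T hd_in_set[of "\<gamma> u z"] by simp
  ultimately show "\<gamma> u z = u # \<gamma> w z"
    using tpath_across_edge[OF edge_to_child[OF T(1-3) child] T(4)] by auto
qed

lemma tpath_avoiding_child: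
  assumes T: "r \<in> T" "u \<in> T" "w \<in> T" "z \<in> T"
    and child: "\<gamma> r w = \<gamma> r u @ [w]" and "w \<notin> set (\<gamma> r z)"
  shows "\<gamma> w z = w # \<gamma> u z"
proof -
  have "w \<notin> set (\<gamma> r u)" using distinct_tpath[of r w] child T by simp
  then have "w \<notin> set (\<gamma> u r) \<union> set (\<gamma> r z)" using tpath_rev[of r u] T assms(6) by simp
  then have "w \<notin> set (\<gamma> u z)" using tpath_subset_join[of u r z] T by blast
  moreover have "w \<in> set (\<gamma> w z)" using T hd_in_set[of "\<gamma> w z"] by simp
  ultimately show ?thesis
    using tpath_across_edge[OF edge_to_child[OF T(1-3) child] T(4)] by auto
qed

end

section \<open>Products over the edges incident to a path\<close>

definition off_path_prod :: "'a set set \<Rightarrow> ('a set \<Rightarrow> 'a \<Rightarrow> int) \<Rightarrow> 'a list \<Rightarrow> 'a \<Rightarrow> int" where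
  "off_path_prod E q xs c = (\<Prod>\<epsilon>\<in>{\<epsilon>\<in>E. c \<in> \<epsilon> \<and> \<epsilon> \<notin> path_edges xs}. q \<epsilon> c)"

definition incident_prod :: "'a set set \<Rightarrow> ('a set \<Rightarrow> 'a \<Rightarrow> int) \<Rightarrow> 'a list \<Rightarrow> int" where
  "incident_prod E q xs = (\<Prod>\<epsilon>\<in>incident_edges E xs. q_path q \<epsilon> xs)"

definition tail_prod :: "'a set set \<Rightarrow> ('a set \<Rightarrow> 'a \<Rightarrow> int) \<Rightarrow> 'a list \<Rightarrow> int" where
  "tail_prod E q xs = (\<Prod>c\<in>set (tl xs). off_path_prod E q xs c)"

lemma xval_eq_incident_prod:
  "xval V A E f q v \<alpha> = f \<alpha> * incident_prod E q (tpath (V \<union> A) E v \<alpha>)"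
  by (simp add: xval_def incident_prod_def Let_def)

context tree
begin

lemma incident_prod_eq:
  assumes "simple_walk xs"
  shows "incident_prod E q xs = (\<Prod>c\<in>set xs. off_path_prod E q xs c)"
proof -
  let ?at = "\<lambda>c. {\<epsilon>\<in>E. c \<in> \<epsilon> \<and> \<epsilon> \<notin> path_edges xs}"
  have meets_once: "c = d" if "\<epsilon> \<in> ?at c" "\<epsilon> \<in> ?at d" "c \<in> set xs" "d \<in> set xs" for \<epsilon> c d
    using incident_edge_meets_path_once[OF assms] that by (auto simp: incident_edges_def)
  have "incident_edges E xs = (\<Union>c\<in>set xs. ?at c)" by (auto simp: incident_edges_def)
  then have "incident_prod E q xs = (\<Prod>\<epsilon>\<in>(\<Union>c\<in>set xs. ?at c). q_path q \<epsilon> xs)"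
    by (simp add: incident_prod_def)
  also have "\<dots> = (\<Prod>c\<in>set xs. \<Prod>\<epsilon>\<in>?at c. q_path q \<epsilon> xs)"
    by (rule prod.UNION_disjoint) (simp_all add: finite_edges, use meets_once in blast)
  also have "\<dots> = (\<Prod>c\<in>set xs. off_path_prod E q xs c)"
    unfolding off_path_prod_def
  proof (intro prod.cong refl)
    fix c \<epsilon> assume "c \<in> set xs" "\<epsilon> \<in> ?at c"
    then have "(SOME u. u \<in> set xs \<and> u \<in> \<epsilon>) = c" using meets_once by (intro some_equality) auto
    then show "q_path q \<epsilon> xs = q \<epsilon> c" by (simp add: q_path_def)
  qed
  finally show ?thesis .
qed

lemma incident_prod_Cons:
  assumes walk: "simple_walk (x # xs)" and "xs \<noteq> []"
  shows "incident_prod E q (x # xs) = bigQ E q {x, hd xs} x * tail_prod E q (x # xs)"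
    and "incident_prod E q xs = q {x, hd xs} (hd xs) * tail_prod E q (x # xs)"
proof -
  let ?e = "{x, hd xs}"
  have path_edges: "path_edges (x # xs) = insert ?e (path_edges xs)"
    using path_edges_Cons[OF \<open>xs \<noteq> []\<close>] .
  have x_new: "x \<notin> set xs" using simple_walk_distinct[OF walk] by simp
  then have x_off: "x \<notin> \<epsilon>" if "\<epsilon> \<in> path_edges xs" for \<epsilon> using that path_edge_subset by blast
  have walk': "simple_walk xs" using simple_walk_appendD(2)[of "[x]" xs] walk \<open>xs \<noteq> []\<close> by simp
  have e: "?e \<in> E" using walk \<open>xs \<noteq> []\<close> by (cases xs) (auto simp: simple_walk_def walk_def)
  have "{\<epsilon>\<in>E. x \<in> \<epsilon> \<and> \<epsilon> \<notin> path_edges (x # xs)} = {e'\<in>E. x \<in> e' \<and> e' \<noteq> ?e}"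
    unfolding path_edges using x_off by blast
  then have "off_path_prod E q (x # xs) x = bigQ E q ?e x"
    by (simp add: off_path_prod_def bigQ_def)
  then show "incident_prod E q (x # xs) = bigQ E q ?e x * tail_prod E q (x # xs)"
    using incident_prod_eq[OF walk] x_new by (simp add: tail_prod_def)
  have split: "off_path_prod E q xs c
      = (if c = hd xs then q ?e (hd xs) else 1) * off_path_prod E q (x # xs) c"
    if "c \<in> set xs" for c
  proof (cases "c = hd xs")
    case True
    have "{\<epsilon>\<in>E. c \<in> \<epsilon> \<and> \<epsilon> \<notin> path_edges xs}
        = insert ?e {\<epsilon>\<in>E. c \<in> \<epsilon> \<and> \<epsilon> \<notin> path_edges (x # xs)}"
      using True e x_off[of ?e] path_edges by blast
    then show ?thesis
      using True finite_edges by (simp add: off_path_prod_def path_edges prod.insert)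
  next
    case False
    then have "c \<notin> ?e" using that x_new by auto
    then have "{\<epsilon>\<in>E. c \<in> \<epsilon> \<and> \<epsilon> \<notin> path_edges xs} = {\<epsilon>\<in>E. c \<in> \<epsilon> \<and> \<epsilon> \<notin> path_edges (x # xs)}"
      using path_edges by auto
    then show ?thesis using False by (simp add: off_path_prod_def)
  qed
  have "incident_prod E q xs = (\<Prod>c\<in>set xs. off_path_prod E q xs c)"
    using incident_prod_eq[OF walk'] .
  also have "\<dots> = (\<Prod>c\<in>set xs. if c = hd xs then q ?e (hd xs) else 1) * tail_prod E q (x # xs)"
    using split by (simp add: tail_prod_def prod.distrib)
  finally show "incident_prod E q xs = q ?e (hd xs) * tail_prod E q (x # xs)"
    using \<open>xs \<noteq> []\<close> by (simp add: prod.delta)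
qed

end

section \<open>Propagation of the sign of N away from the root\<close>

lemma sign_transfer:
  fixes a b c d R P n m :: int
  assumes n: "n = c * R + a * P" and m: "m = b * R + d * P"
    and a: "a \<ge> 1" and d: "d \<ge> 1" and det: "a * b - c * d < 0" and R: "R \<ge> 0"
  shows "n < 0 \<Longrightarrow> m < 0" and "n \<le> 0 \<Longrightarrow> m \<le> 0" and "n \<le> 0 \<Longrightarrow> R > 0 \<Longrightarrow> m < 0"
proof -
  have key: "a * m = d * n + R * (a * b - c * d)" using n m by (simp add: algebra_simps)
  have "R * (a * b - c * d) \<le> 0" using R det by (simp add: mult_nonneg_nonpos)
  moreover have "d * n < 0" if "n < 0" using that d by (simp add: mult_pos_neg)
  moreover have "d * n \<le> 0" if "n \<le> 0" using that d by (simp add: mult_nonneg_nonpos)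
  moreover have "R * (a * b - c * d) < 0" if "R > 0" using that det by (simp add: mult_pos_neg)
  moreover have "m < 0" if "a * m < 0" using that a by (simp add: mult_less_0_iff)
  moreover have "m \<le> 0" if "a * m \<le> 0" using that a by (simp add: mult_le_0_iff)
  ultimately show "n < 0 \<Longrightarrow> m < 0" and "n \<le> 0 \<Longrightarrow> m \<le> 0" and "n \<le> 0 \<Longrightarrow> R > 0 \<Longrightarrow> m < 0"
    using key by linarith+
qed

locale decorated_rooted =
  fixes V A :: "'a set" and E :: "'a set set" and f :: "'a \<Rightarrow> int"
    and q :: "'a set \<Rightarrow> 'a \<Rightarrow> int" and v0 :: 'a
  assumes decorated_rooted: "decorated_rooted_tree V A E f q v0"
begin

sublocale tree "V \<union> A" E
  using decorated_rooted by unfold_locales (simp add: decorated_rooted_tree_def decorated_tree_def)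

abbreviation N :: "'a \<Rightarrow> int" where "N v \<equiv> Nval V A E f q v"

lemma finite_A: "finite A"
  and root_in_V: "v0 \<in> V"
  and arrow_in_one_edge: "\<alpha> \<in> A \<Longrightarrow> \<exists>!e. e \<in> E \<and> \<alpha> \<in> e"
  and q_arrow: "\<alpha> \<in> A \<Longrightarrow> e \<in> E \<Longrightarrow> \<alpha> \<in> e \<Longrightarrow> q e \<alpha> = 1"
  and q_root: "e \<in> E \<Longrightarrow> v0 \<in> e \<Longrightarrow> q e v0 = 1"
  and q_vertex: "v \<in> V - {v0} \<Longrightarrow> e \<in> E \<Longrightarrow> v \<in> e \<Longrightarrow> e \<notin> path_edges (\<gamma> v0 v) \<Longrightarrow> q e v \<ge> 1"
  using decorated_rooted by (auto simp: decorated_rooted_tree_def decorated_tree_def is_root_def)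

lemma q_ge_1_off_root_path:
  assumes "c \<in> V \<union> A" "\<epsilon> \<in> E" "c \<in> \<epsilon>" "\<epsilon> \<notin> path_edges (\<gamma> v0 c)"
  shows "q \<epsilon> c \<ge> 1"
  using assms q_arrow q_root q_vertex by (cases "c = v0") auto

lemma tpath_subset_V:
  assumes "x \<in> V" "y \<in> V"
  shows "set (\<gamma> x y) \<subseteq> V"
proof
  fix c assume c: "c \<in> set (\<gamma> x y)"
  show "c \<in> V"
  proof (rule ccontr)
    assume "c \<notin> V"
    then have "c \<in> A" "c \<noteq> x" "c \<noteq> y" using c tpath_subset[of x y] assms by auto
    obtain P S where split: "\<gamma> x y = P @ c # S" using c by (meson split_list)
    have "P \<noteq> []" "S \<noteq> []"
      using hd_tpath[of x y] last_tpath[of x y] split assms \<open>c \<noteq> x\<close> \<open>c \<noteq> y\<close> by auto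
    then show False
      using simple_walk_interior_edges[of P c S] simple_walk_tpath[of x y] split assms
        arrow_in_one_edge[OF \<open>c \<in> A\<close>] by auto
  qed
qed

lemma tail_prod_ge_1:
  assumes "z \<in> V \<union> A" "\<gamma> v0 z = xs @ ys"
  shows "tail_prod E q ys \<ge> 1"
  unfolding tail_prod_def off_path_prod_def
proof (intro prod_ge_1)
  fix c \<epsilon> assume c: "c \<in> set (tl ys)" and \<epsilon>: "\<epsilon> \<in> {\<epsilon>\<in>E. c \<in> \<epsilon> \<and> \<epsilon> \<notin> path_edges ys}"
  obtain u zs where ys: "ys = u # zs" using c by (cases ys) auto
  have "c \<in> set zs" using c ys by simp
  then obtain G1 G2 where zs: "zs = G1 @ c # G2" by (meson split_list)
  have T: "v0 \<in> V \<union> A" using root_in_V by simp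
  have walk: "simple_walk (xs @ (u # G1 @ [c]) @ G2)"
    using simple_walk_tpath[OF T assms(1)] assms(2) ys zs by simp
  have "hd (xs @ u # G1 @ [c]) = v0"
    using hd_tpath[OF T assms(1)] assms(2) ys zs by (cases xs) auto
  then have root_path: "\<gamma> v0 c = xs @ u # G1 @ [c]"
    using tpath_infix[of "[]" "xs @ u # G1 @ [c]" G2] walk by simp
  have "c \<notin> set xs" "c \<noteq> u" using simple_walk_distinct[OF walk] by auto
  moreover have "path_edges (u # G1 @ [c]) \<subseteq> path_edges ys"
    using ys zs path_edges_append[of "u # G1 @ [c]" G2] by auto
  ultimately have "\<epsilon> \<notin> path_edges (\<gamma> v0 c)"
    using \<epsilon> path_edge_subset[of \<epsilon> xs] unfolding root_path path_edges_append by (auto split: if_splits)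
  moreover have "c \<in> V \<union> A" using tpath_subset[OF T assms(1)] assms(2) ys zs by auto
  ultimately show "q \<epsilon> c \<ge> 1" using q_ge_1_off_root_path \<epsilon> by blast
qed

lemma xval_across_edge:
  assumes "x \<in> V \<union> A" "y \<in> V \<union> A" "z \<in> V \<union> A" and path: "\<gamma> x z = x # \<gamma> y z"
  shows "xval V A E f q x z = f z * bigQ E q {x, y} x * tail_prod E q (\<gamma> x z)"
    and "xval V A E f q y z = f z * q {x, y} y * tail_prod E q (\<gamma> x z)"
  using incident_prod_Cons[of x "\<gamma> y z"] simple_walk_tpath[of x z] assms
  by (simp_all add: xval_eq_incident_prod)

lemma Nval_across_edge:
  assumes "x \<in> V \<union> A" "y \<in> V \<union> A"
    and beyond_y: "\<And>\<alpha>. \<alpha> \<in> A \<inter> S \<Longrightarrow> \<gamma> x \<alpha> = x # \<gamma> y \<alpha>"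
    and beyond_x: "\<And>\<alpha>. \<alpha> \<in> A - S \<Longrightarrow> \<gamma> y \<alpha> = y # \<gamma> x \<alpha>"
  shows "N x = bigQ E q {x, y} x * (\<Sum>\<alpha>\<in>(A - A0 A f) \<inter> S. f \<alpha> * tail_prod E q (\<gamma> x \<alpha>))
             + q {x, y} x * (\<Sum>\<alpha>\<in>(A - A0 A f) - S. f \<alpha> * tail_prod E q (\<gamma> y \<alpha>))"
proof -
  have "N x = (\<Sum>\<alpha>\<in>(A - A0 A f) \<inter> S. xval V A E f q x \<alpha>) + (\<Sum>\<alpha>\<in>(A - A0 A f) - S. xval V A E f q x \<alpha>)"
    unfolding Nval_def using finite_A by (simp add: sum.Int_Diff)
  also have "(\<Sum>\<alpha>\<in>(A - A0 A f) \<inter> S. xval V A E f q x \<alpha>)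
      = bigQ E q {x, y} x * (\<Sum>\<alpha>\<in>(A - A0 A f) \<inter> S. f \<alpha> * tail_prod E q (\<gamma> x \<alpha>))"
    unfolding sum_distrib_left using xval_across_edge(1) assms beyond_y
    by (intro sum.cong) auto
  also have "(\<Sum>\<alpha>\<in>(A - A0 A f) - S. xval V A E f q x \<alpha>)
      = q {x, y} x * (\<Sum>\<alpha>\<in>(A - A0 A f) - S. f \<alpha> * tail_prod E q (\<gamma> y \<alpha>))"
    unfolding sum_distrib_left using xval_across_edge(2)[of y x] assms beyond_x
    by (intro sum.cong) (auto simp: insert_commute)
  finally show ?thesis .
qed

lemma q_child_bounds:
  assumes "u \<in> V" "w \<in> V" and child: "\<gamma> v0 w = \<gamma> v0 u @ [w]"
  shows "q {u, w} u \<ge> 1" and "bigQ E q {u, w} w \<ge> 1"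
proof -
  have T: "v0 \<in> V \<union> A" "u \<in> V \<union> A" "w \<in> V \<union> A" using assms root_in_V by auto
  have "w \<notin> set (\<gamma> v0 u)" using distinct_tpath[of v0 w] child T by simp
  then have off: "\<epsilon> \<notin> path_edges (\<gamma> v0 u)" if "w \<in> \<epsilon>" for \<epsilon>
    using that path_edge_subset by blast
  show "q {u, w} u \<ge> 1"
    using q_ge_1_off_root_path[of u "{u, w}"] off edge_to_child[OF T child] T by simp
  have "path_edges (\<gamma> v0 w) = insert {u, w} (path_edges (\<gamma> v0 u))"
    using child path_edges_append[of "\<gamma> v0 u" "[w]"] T by (simp add: path_edges_def)
  then show "bigQ E q {u, w} w \<ge> 1"
    unfolding bigQ_def using q_ge_1_off_root_path[of w] off T by (intro prod_ge_1) auto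
qed

lemma Nval_child_decomp:
  assumes f_nonneg: "\<forall>\<alpha>\<in>A. f \<alpha> \<ge> 0"
    and "u \<in> V" "w \<in> V" and child: "\<gamma> v0 w = \<gamma> v0 u @ [w]"
  obtains R P where "N u = bigQ E q {u, w} u * R + q {u, w} u * P"
    and "N w = q {u, w} w * R + bigQ E q {u, w} w * P"
    and "R \<ge> 0" and "\<And>\<alpha>. \<alpha> \<in> A - A0 A f \<Longrightarrow> w \<in> set (\<gamma> v0 \<alpha>) \<Longrightarrow> R > 0"
proof -
  define S where "S = {\<alpha>. w \<in> set (\<gamma> v0 \<alpha>)}"
  define R where "R = (\<Sum>\<alpha>\<in>(A - A0 A f) \<inter> S. f \<alpha> * tail_prod E q (\<gamma> u \<alpha>))"
  define P where "P = (\<Sum>\<alpha>\<in>(A - A0 A f) - S. f \<alpha> * tail_prod E q (\<gamma> w \<alpha>))"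
  have T: "v0 \<in> V \<union> A" "u \<in> V \<union> A" "w \<in> V \<union> A" using assms(2,3) root_in_V by auto
  have beyond_w: "\<gamma> u \<alpha> = u # \<gamma> w \<alpha>" "\<gamma> v0 \<alpha> = \<gamma> v0 u @ \<gamma> w \<alpha>" if "\<alpha> \<in> A \<inter> S" for \<alpha>
    using tpath_through_child[OF T _ child] that by (auto simp: S_def)
  have beyond_u: "\<gamma> w \<alpha> = w # \<gamma> u \<alpha>" if "\<alpha> \<in> A - S" for \<alpha>
    using tpath_avoiding_child[OF T _ child] that by (auto simp: S_def)
  have "N u = bigQ E q {u, w} u * R + q {u, w} u * P"
    using Nval_across_edge[of u w S] T beyond_w beyond_u unfolding R_def P_def by simp
  moreover have "N w = bigQ E q {w, u} w * P + q {w, u} w * R"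
    using Nval_across_edge[of w u "- S"] T beyond_w beyond_u unfolding R_def P_def
    by (simp add: Diff_Compl flip: Diff_eq)
  moreover have tail: "tail_prod E q (\<gamma> u \<alpha>) \<ge> 1" if "\<alpha> \<in> A \<inter> S" for \<alpha>
  proof -
    have "\<gamma> v0 u = butlast (\<gamma> v0 u) @ [u]"
      using T by (metis append_butlast_last_id last_tpath tpath_nonempty)
    then have "\<gamma> v0 \<alpha> = butlast (\<gamma> v0 u) @ \<gamma> u \<alpha>"
      using beyond_w[OF that] by (metis append.assoc append_Cons append_Nil)
    then show ?thesis using tail_prod_ge_1 that by blast
  qed
  moreover have "R \<ge> 0"
    unfolding R_def using f_nonneg tail by (intro sum_nonneg) (simp add: order_trans[OF zero_le_one])
  moreover have "R > 0" if "\<alpha> \<in> A - A0 A f" "w \<in> set (\<gamma> v0 \<alpha>)" for \<alpha>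
  proof -
    have "f \<alpha> > 0" using that f_nonneg by (auto simp: A0_def order_le_less)
    then have "f \<alpha> * tail_prod E q (\<gamma> u \<alpha>) > 0" using tail[of \<alpha>] that by (simp add: S_def)
    then show ?thesis
      unfolding R_def using that finite_A f_nonneg tail
      by (intro sum_pos2[of _ \<alpha>]) (auto simp: S_def order_trans[OF zero_le_one])
  qed
  ultimately show thesis using that by (simp add: insert_commute)
qed

context
  assumes negative_determinants: "negative_determinants V E q"
    and f_nonneg: "\<forall>\<alpha>\<in>A. f \<alpha> \<ge> 0"
begin

lemma Nval_child_sign:
  assumes "u \<in> V" "w \<in> V" and child: "\<gamma> v0 w = \<gamma> v0 u @ [w]"
  shows "N u < 0 \<Longrightarrow> N w < 0" and "N u \<le> 0 \<Longrightarrow> N w \<le> 0"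
    and "N u \<le> 0 \<Longrightarrow> \<alpha> \<in> A - A0 A f \<Longrightarrow> w \<in> set (\<gamma> v0 \<alpha>) \<Longrightarrow> N w < 0"
proof -
  obtain R P where Nu: "N u = bigQ E q {u, w} u * R + q {u, w} u * P"
    and Nw: "N w = q {u, w} w * R + bigQ E q {u, w} w * P"
    and "R \<ge> 0" and R_pos: "\<And>\<alpha>. \<alpha> \<in> A - A0 A f \<Longrightarrow> w \<in> set (\<gamma> v0 \<alpha>) \<Longrightarrow> R > 0"
    by (rule Nval_child_decomp[OF f_nonneg assms]) blast
  have "{u, w} \<in> E" using edge_to_child[OF _ _ _ child] assms root_in_V by simp
  then have "q {u, w} u * q {u, w} w - bigQ E q {u, w} u * bigQ E q {u, w} w < 0"
    using negative_determinants assms by (auto simp: negative_determinants_def edge_det_def)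
  note transfer = sign_transfer[OF Nu Nw q_child_bounds[OF assms] this \<open>R \<ge> 0\<close>]
  show "N u < 0 \<Longrightarrow> N w < 0" and "N u \<le> 0 \<Longrightarrow> N w \<le> 0"
    and "N u \<le> 0 \<Longrightarrow> \<alpha> \<in> A - A0 A f \<Longrightarrow> w \<in> set (\<gamma> v0 \<alpha>) \<Longrightarrow> N w < 0"
    using transfer R_pos by blast+
qed

lemma Nval_along_root_path:
  assumes "v \<in> V" "w \<in> V" "v \<in> set (\<gamma> v0 w)"
  shows "(N v < 0 \<longrightarrow> N w < 0) \<and> (N v \<le> 0 \<longrightarrow> N w \<le> 0)"
  using assms(2,3)
proof (induction "length (\<gamma> v0 w)" arbitrary: w rule: less_induct)
  case less
  show ?case
  proof (cases "v = w")
    case False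
    obtain u where u: "u \<in> set (\<gamma> v0 w)" "\<gamma> v0 w = \<gamma> v0 u @ [w]" "v \<in> set (\<gamma> v0 u)"
      using tpath_parent[of v0 w v] less.prems False root_in_V by auto
    have "u \<in> V" using u(1) tpath_subset_V[of v0 w] root_in_V less.prems(1) by auto
    then have "(N v < 0 \<longrightarrow> N u < 0) \<and> (N v \<le> 0 \<longrightarrow> N u \<le> 0)"
      using less.hyps[of u] u by simp
    then show ?thesis using Nval_child_sign(1,2)[OF \<open>u \<in> V\<close> less.prems(1) u(2)] by blast
  qed simp
qed

lemma Nval_below_arrow:
  assumes "v \<in> V" "w \<in> V" "tree_less V A E v0 v w" "N v \<le> 0"
    and "\<alpha> \<in> A - A0 A f" "tree_less V A E v0 w \<alpha>"
  shows "N w < 0"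
proof -
  obtain u where u: "u \<in> set (\<gamma> v0 w)" "\<gamma> v0 w = \<gamma> v0 u @ [w]" "v \<in> set (\<gamma> v0 u)"
    using tpath_parent[of v0 w v] assms(2,3) root_in_V by (auto simp: tree_less_def)
  have "u \<in> V" using u(1) tpath_subset_V[of v0 w] root_in_V assms(2) by auto
  then have "N u \<le> 0" using Nval_along_root_path[of v u] u(3) assms(1,4) by simp
  then show ?thesis
    using Nval_child_sign(3)[OF \<open>u \<in> V\<close> assms(2) u(2) _ assms(5)] assms(6) by (simp add: tree_less_def)
qed

lemma connected_Nval_nonneg: "connected_set (V \<union> A) E {v\<in>V. N v \<ge> 0}"
proof (rule connected_set_if_root_paths_closed)
  fix w assume "w \<in> {v\<in>V. N v \<ge> 0}"
  then show "set (\<gamma> v0 w) \<subseteq> {v\<in>V. N v \<ge> 0}"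
    using tpath_subset_V[of v0 w] root_in_V Nval_along_root_path[of _ w] by fastforce
qed (use root_in_V in simp)

lemma connected_Nval_pos: "connected_set (V \<union> A) E {v\<in>V. N v > 0}"
proof (rule connected_set_if_root_paths_closed)
  fix w assume "w \<in> {v\<in>V. N v > 0}"
  then show "set (\<gamma> v0 w) \<subseteq> {v\<in>V. N v > 0}"
    using tpath_subset_V[of v0 w] root_in_V Nval_along_root_path[of _ w] by fastforce
qed (use root_in_V in simp)

end

end

theorem corollary5p9:
  fixes V A :: "'a set" and E :: "'a set set" and f :: "'a \<Rightarrow> int"
    and q :: "'a set \<Rightarrow> 'a \<Rightarrow> int" and v0 :: 'a
  assumes "decorated_rooted_tree V A E f q v0"
    and "negative_determinants V E q"
    and "\<forall>\<alpha>\<in>A. f \<alpha> \<ge> 0"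
  shows "(\<forall>v\<in>V. \<forall>v'\<in>V. tree_less V A E v0 v v' \<longrightarrow>
            (Nval V A E f q v < 0 \<longrightarrow> Nval V A E f q v' < 0) \<and>
            (Nval V A E f q v \<le> 0 \<longrightarrow> Nval V A E f q v' \<le> 0) \<and>
            (Nval V A E f q v \<le> 0 \<and> (\<exists>\<alpha>\<in>A - A0 A f. tree_less V A E v0 v' \<alpha>)
               \<longrightarrow> Nval V A E f q v' < 0))
       \<and> connected_set (V \<union> A) E {v\<in>V. Nval V A E f q v \<ge> 0}
       \<and> connected_set (V \<union> A) E {v\<in>V. Nval V A E f q v > 0}"
proof -
  interpret decorated_rooted V A E f q v0
    using assms(1) by unfold_locales
  show ?thesis
    using Nval_along_root_path[OF assms(2,3)] Nval_below_arrow[OF assms(2,3)]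
      connected_Nval_nonneg[OF assms(2,3)] connected_Nval_pos[OF assms(2,3)]
    by (auto simp: tree_less_def)
qed

end
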